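(* Consider a discounted Markov decision problem and the inexact policy mirror descent method as described in the context, with $\pi^{(0)}\in\operatorname{rint}\Pi$ and step sizes $\eta_k>0$, and suppose that the inexact $Q$-evaluations satisfy $\|\widehat Q(\pi^{(k)})-Q(\pi^{(k)})\|_\infty\le\tau$ for all $k\ge0$. Then for all $k\ge0$, \[ \bigl\langle\widehat Q_s(\pi^{(k)}),\pi^{(k+1)}_s-\pi^{(k)}_s\bigr\rangle\le0\qquad\forall s\in\mathcal{S}, \] and for any $\rho\in\Delta(\mathcal{S})$, \[ V_\rho(\pi^{(k+1)})-V_\rho(\pi^{(k)})\le\frac{2}{1-\gamma}\tau. \]
   Context: A discounted Markov decision problem (cost-minimization form): finite state set $\mathcal{S}$, finite action set $\mathcal{A}$, transition probabilities $P(s'|s,a)$, cost $R:\mathcal{S}\times\mathcal{A}\to[0,1]$, discount $\gamma\in[0,1)$. Policies $\Pi=\Delta(\mathcal{A})^{|\mathcal{S}|}$; $\operatorname{rint}\Pi$ is the set of policies with all entries $\pi_{s,a}>0$. $V_s(\pi)=\mathbf{E}\bigl[\sum_{t\ge0}\gamma^tR(s_t,a_t)\mid s_0=s\bigr]$ with $a_t\sim\pi_{s_t}$, $s_{t+1}\sim P(\cdot|s_t,a_t)$; $V_\rho(\pi)=\sum_s\rho_sV_s(\pi)$. $Q_{s,a}(\pi)=R_{s,a}+\gamma\sum_{s'}P(s'|s,a)V_{s'}(\pi)$; $Q(\pi)\in\mathbf{R}^{|\mathcal{S}|\times|\mathcal{A}|}$, $Q_s(\pi)\in\mathbf{R}^{|\mathcal{A}|}$.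 Bregman divergence: $h:\mathbf{R}^{|\mathcal{A}|}\to\mathbf{R}\cup\{+\infty\}$ is a convex function of Legendre type (proper, closed, essentially smooth, strictly convex on the relative interior of its domain) with $\Delta(\mathcal{A})\subseteq\operatorname{dom}h$ and $\operatorname{rint}\Delta(\mathcal{A})\subseteq\operatorname{rint}\operatorname{dom}h$; $D(p,p')=h(p)-h(p')-\langle\nabla h(p'),p-p'\rangle$. Inexact policy mirror descent: at each iteration an estimate $\widehat Q(\pi^{(k)})\in\mathbf{R}^{|\mathcal{S}|\times|\mathcal{A}|}$ of $Q(\pi^{(k)})$ is available, and for each $s$, $\pi^{(k+1)}_s=\arg\min_{p\in\Delta(\mathcal{A})}\{\eta_k\langle\widehat Q_s(\pi^{(k)}),p\rangle+D(p,\pi^{(k)}_s)\}$. *)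

theory Defs
  imports "HOL-Analysis.Analysis"
begin

definition act_simplex :: "(real^'a::finite) set" where
  "act_simplex = {p. (\<forall>a. 0 \<le> p $ a) \<and> (\<Sum>a\<in>UNIV. p $ a) = 1}"

definition is_policy :: "('s \<Rightarrow> real^'a::finite) \<Rightarrow> bool" where
  "is_policy \<pi> \<longleftrightarrow> (\<forall>s. \<pi> s \<in> act_simplex)"

text \<open>Relative interior of the policy set: all entries strictly positive.\<close>
definition rint_policy :: "('s \<Rightarrow> real^'a::finite) \<Rightarrow> bool" where
  "rint_policy \<pi> \<longleftrightarrow> is_policy \<pi> \<and> (\<forall>s a. 0 < \<pi> s $ a)"

definition is_mdp :: "('s::finite \<Rightarrow> 'a::finite \<Rightarrow> 's \<Rightarrow> real) \<Rightarrow> ('s \<Rightarrow> 'a \<Rightarrow> real) \<Rightarrow> real \<Rightarrow> bool" where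
  "is_mdp P R \<gamma> \<longleftrightarrow>
     (\<forall>s a s'. 0 \<le> P s a s') \<and> (\<forall>s a. (\<Sum>s'\<in>UNIV. P s a s') = 1) \<and>
     (\<forall>s a. 0 \<le> R s a \<and> R s a \<le> 1) \<and> 0 \<le> \<gamma> \<and> \<gamma> < 1"

definition Ppi :: "('s::finite \<Rightarrow> 'a::finite \<Rightarrow> 's \<Rightarrow> real) \<Rightarrow> ('s \<Rightarrow> real^'a) \<Rightarrow> 's \<Rightarrow> 's \<Rightarrow> real" where
  "Ppi P \<pi> s s' = (\<Sum>a\<in>UNIV. \<pi> s $ a * P s a s')"

definition rpi :: "('s \<Rightarrow> 'a::finite \<Rightarrow> real) \<Rightarrow> ('s \<Rightarrow> real^'a) \<Rightarrow> 's \<Rightarrow> real" where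
  "rpi R \<pi> s = (\<Sum>a\<in>UNIV. \<pi> s $ a * R s a)"

text \<open>Law of s_t given s_0 = s0: state_dist P pi t s0 s = Pr(s_t = s | s_0 = s0).\<close>
primrec state_dist :: "('s::finite \<Rightarrow> 'a::finite \<Rightarrow> 's \<Rightarrow> real) \<Rightarrow> ('s \<Rightarrow> real^'a) \<Rightarrow> nat \<Rightarrow> 's \<Rightarrow> 's \<Rightarrow> real" where
  "state_dist P \<pi> 0 s0 = (\<lambda>s. if s = s0 then 1 else 0)"
| "state_dist P \<pi> (Suc t) s0 = (\<lambda>s'. \<Sum>s\<in>UNIV. state_dist P \<pi> t s0 s * Ppi P \<pi> s s')"

text \<open>V_s(pi) = E[ sum_t gamma^t R(s_t,a_t) | s_0 = s ], written out:
  E[R(s_t,a_t) | s_0] = sum_s Pr(s_t = s) * sum_a pi_s(a) R(s,a).\<close>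
definition Vf :: "('s::finite \<Rightarrow> 'a::finite \<Rightarrow> 's \<Rightarrow> real) \<Rightarrow> ('s \<Rightarrow> 'a \<Rightarrow> real) \<Rightarrow> real \<Rightarrow> ('s \<Rightarrow> real^'a) \<Rightarrow> 's \<Rightarrow> real" where
  "Vf P R \<gamma> \<pi> s0 = (\<Sum>t. \<gamma> ^ t * (\<Sum>s\<in>UNIV. state_dist P \<pi> t s0 s * rpi R \<pi> s))"

definition Vrho :: "('s::finite \<Rightarrow> 'a::finite \<Rightarrow> 's \<Rightarrow> real) \<Rightarrow> ('s \<Rightarrow> 'a \<Rightarrow> real) \<Rightarrow> real \<Rightarrow> ('s \<Rightarrow> real^'a) \<Rightarrow> ('s \<Rightarrow> real) \<Rightarrow> real" where
  "Vrho P R \<gamma> \<pi> \<rho> = (\<Sum>s\<in>UNIV. \<rho> s * Vf P R \<gamma> \<pi> s)"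

definition Qf :: "('s::finite \<Rightarrow> 'a::finite \<Rightarrow> 's \<Rightarrow> real) \<Rightarrow> ('s \<Rightarrow> 'a \<Rightarrow> real) \<Rightarrow> real \<Rightarrow> ('s \<Rightarrow> real^'a) \<Rightarrow> 's \<Rightarrow> real^'a" where
  "Qf P R \<gamma> \<pi> s = (\<chi> a. R s a + \<gamma> * (\<Sum>s'\<in>UNIV. P s a s' * Vf P R \<gamma> \<pi> s'))"

definition prob_dist :: "('s::finite \<Rightarrow> real) \<Rightarrow> bool" where
  "prob_dist \<rho> \<longleftrightarrow> (\<forall>s. 0 \<le> \<rho> s) \<and> (\<Sum>s\<in>UNIV. \<rho> s) = 1"

definition edom :: "('n \<Rightarrow> ereal) \<Rightarrow> 'n set" where
  "edom h = {x. h x < \<infinity>}"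

text \<open>Real-valued restriction (meaningful on edom h for proper h).\<close>
definition hr :: "('n \<Rightarrow> ereal) \<Rightarrow> 'n \<Rightarrow> real" where
  "hr h x = real_of_ereal (h x)"

definition grad :: "(real^'n::finite \<Rightarrow> ereal) \<Rightarrow> real^'n \<Rightarrow> real^'n" where
  "grad h x = (SOME g. (hr h has_derivative (\<lambda>v. g \<bullet> v)) (at x))"

definition proper_convex :: "(real^'n::finite \<Rightarrow> ereal) \<Rightarrow> bool" where
  "proper_convex h \<longleftrightarrow> (\<forall>x. h x > -\<infinity>) \<and> edom h \<noteq> {} \<and>
     convex (edom h) \<and> convex_on (edom h) (hr h)"

text \<open>Closed = lower semicontinuous = closed epigraph.\<close>
definition closed_fun :: "(real^'n::finite \<Rightarrow> ereal) \<Rightarrow> bool" where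
  "closed_fun h \<longleftrightarrow> closed {(x, t::real). h x \<le> ereal t}"

definition essentially_smooth :: "(real^'n::finite \<Rightarrow> ereal) \<Rightarrow> bool" where
  "essentially_smooth h \<longleftrightarrow>
     interior (edom h) \<noteq> {} \<and>
     (\<forall>x\<in>interior (edom h). \<exists>g. (hr h has_derivative (\<lambda>v. g \<bullet> v)) (at x)) \<and>
     (\<forall>X x. (\<forall>i. X i \<in> interior (edom h)) \<longrightarrow> X \<longlonglongrightarrow> x \<longrightarrow> x \<in> frontier (interior (edom h)) \<longrightarrow>
        filterlim (\<lambda>i. norm (grad h (X i))) at_top sequentially)"

definition strictly_convex_on :: "'n::real_vector set \<Rightarrow> ('n \<Rightarrow> real) \<Rightarrow> bool" where
  "strictly_convex_on S f \<longleftrightarrow>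
     (\<forall>x\<in>S. \<forall>y\<in>S. x \<noteq> y \<longrightarrow> (\<forall>u::real. 0 < u \<and> u < 1 \<longrightarrow>
        f (u *\<^sub>R x + (1 - u) *\<^sub>R y) < u * f x + (1 - u) * f y))"

definition legendre :: "(real^'n::finite \<Rightarrow> ereal) \<Rightarrow> bool" where
  "legendre h \<longleftrightarrow> proper_convex h \<and> closed_fun h \<and> essentially_smooth h \<and>
     strictly_convex_on (rel_interior (edom h)) (hr h)"

definition bregman :: "(real^'n::finite \<Rightarrow> ereal) \<Rightarrow> real^'n \<Rightarrow> real^'n \<Rightarrow> ereal" where
  "bregman h p p' = h p - h p' - ereal (grad h p' \<bullet> (p - p'))"

end

theory Submission
  imports Defs
begin

(* Taking p = pi_k as competitor in the mirror step and using that the Bregman divergence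
   is nonnegative gives <Qhat_k, pi_(k+1) - pi_k> <= 0. This needs pi_k in the interior of
   dom h, where grad h is a genuine gradient. Essential smoothness keeps every iterate there:
   at a minimiser x on the boundary, optimality bounds the slope of h along the segment from x
   towards an interior point, hence bounds grad h on that segment, whereas grad h must blow up
   as the segment approaches x.
   Replacing Qhat by Q costs at most 2 tau because both policies are distributions, and the
   performance difference identity V(pi') - V(pi) = <Q(pi), pi' - pi> + gamma P_pi' (V(pi') - V(pi)),
   read at a state where V(pi') - V(pi) is largest, turns this into the bound 2 tau / (1 - gamma). *)

section \<open>Policy evaluation\<close>

lemma Ppi_nonneg: "is_mdp P R \<gamma> \<Longrightarrow> is_policy \<pi> \<Longrightarrow> 0 \<le> Ppi P \<pi> s s'"
  unfolding Ppi_def is_mdp_def is_policy_def act_simplex_def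
  by (auto intro!: sum_nonneg)

lemma Ppi_row_sum: "is_mdp P R \<gamma> \<Longrightarrow> is_policy \<pi> \<Longrightarrow> (\<Sum>s'\<in>UNIV. Ppi P \<pi> s s') = 1"
  unfolding Ppi_def is_mdp_def is_policy_def act_simplex_def
  by (subst sum.swap) (simp add: sum_distrib_left[symmetric])

lemma state_dist_nonneg: "is_mdp P R \<gamma> \<Longrightarrow> is_policy \<pi> \<Longrightarrow> 0 \<le> state_dist P \<pi> t s0 s"
  by (induction t arbitrary: s) (auto intro!: sum_nonneg mult_nonneg_nonneg Ppi_nonneg)

lemma state_dist_row_sum:
  assumes "is_mdp P R \<gamma>" "is_policy \<pi>"
  shows "(\<Sum>s\<in>UNIV. state_dist P \<pi> t s0 s) = 1"
proof (induction t)
  case (Suc t)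
  then show ?case
    by (simp, subst sum.swap) (simp add: sum_distrib_left[symmetric] Ppi_row_sum[OF assms])
qed simp

lemma state_dist_Suc_first_step:
  "state_dist P \<pi> (Suc t) s0 s = (\<Sum>s1\<in>UNIV. Ppi P \<pi> s0 s1 * state_dist P \<pi> t s1 s)"
proof (induction t arbitrary: s)
  case 0
  then show ?case
    by (simp add: if_distrib[of "\<lambda>x. x * _"] if_distrib[of "\<lambda>x. _ * x"] cong: if_cong)
next
  case (Suc t)
  then show ?case
    by (simp only: state_dist.simps sum_distrib_left sum_distrib_right, subst sum.swap)
      (simp add: mult.assoc)
qed

definition expected_cost ::
    "('s::finite \<Rightarrow> 'a::finite \<Rightarrow> 's \<Rightarrow> real) \<Rightarrow> ('s \<Rightarrow> 'a \<Rightarrow> real) \<Rightarrow> ('s \<Rightarrow> real^'a) \<Rightarrow> nat \<Rightarrow> 's \<Rightarrow> real"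
  where "expected_cost P R \<pi> t s0 = (\<Sum>s\<in>UNIV. state_dist P \<pi> t s0 s * rpi R \<pi> s)"

lemma Vf_eq_suminf_expected_cost: "Vf P R \<gamma> \<pi> s0 = (\<Sum>t. \<gamma> ^ t * expected_cost P R \<pi> t s0)"
  unfolding Vf_def expected_cost_def ..

lemma rpi_bounds:
  assumes "is_mdp P R \<gamma>" "is_policy \<pi>"
  shows "0 \<le> rpi R \<pi> s" "rpi R \<pi> s \<le> 1"
proof -
  show "0 \<le> rpi R \<pi> s"
    using assms unfolding rpi_def is_mdp_def is_policy_def act_simplex_def
    by (auto intro!: sum_nonneg)
  have "rpi R \<pi> s \<le> (\<Sum>a\<in>UNIV. \<pi> s $ a * 1)"
    using assms unfolding rpi_def is_mdp_def is_policy_def act_simplex_def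
    by (intro sum_mono mult_left_mono) auto
  also have "\<dots> = 1" using assms(2) by (simp add: is_policy_def act_simplex_def)
  finally show "rpi R \<pi> s \<le> 1" .
qed

lemma expected_cost_bounds:
  assumes "is_mdp P R \<gamma>" "is_policy \<pi>"
  shows "0 \<le> expected_cost P R \<pi> t s0" "expected_cost P R \<pi> t s0 \<le> 1"
proof -
  show "0 \<le> expected_cost P R \<pi> t s0"
    unfolding expected_cost_def
    using state_dist_nonneg[OF assms] rpi_bounds[OF assms] by (auto intro!: sum_nonneg)
  have "expected_cost P R \<pi> t s0 \<le> (\<Sum>s\<in>UNIV. state_dist P \<pi> t s0 s * 1)"
    unfolding expected_cost_def
    using state_dist_nonneg[OF assms] rpi_bounds[OF assms] by (intro sum_mono mult_left_mono) auto
  also have "\<dots> = 1" by (simp add: state_dist_row_sum[OF assms])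
  finally show "expected_cost P R \<pi> t s0 \<le> 1" .
qed

lemma expected_cost_Suc:
  "expected_cost P R \<pi> (Suc t) s0 = (\<Sum>s1\<in>UNIV. Ppi P \<pi> s0 s1 * expected_cost P R \<pi> t s1)"
  unfolding expected_cost_def state_dist_Suc_first_step
  by (simp only: sum_distrib_left sum_distrib_right, subst sum.swap) (simp add: mult.assoc)

lemma summable_discounted_expected_cost:
  assumes "is_mdp P R \<gamma>" "is_policy \<pi>"
  shows "summable (\<lambda>t. \<gamma> ^ t * expected_cost P R \<pi> t s0)"
proof (rule summable_comparison_test[OF _ summable_geometric])
  have \<gamma>: "0 \<le> \<gamma>" "\<gamma> < 1" using assms(1) by (auto simp: is_mdp_def)
  have "norm (\<gamma> ^ t * expected_cost P R \<pi> t s0) \<le> \<gamma> ^ t" for t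
    using expected_cost_bounds[OF assms, of t s0] \<gamma>(1) by (simp add: abs_mult mult_left_le)
  then show "\<exists>N. \<forall>t\<ge>N. norm (\<gamma> ^ t * expected_cost P R \<pi> t s0) \<le> \<gamma> ^ t" by blast
  show "norm \<gamma> < 1" using \<gamma> by simp
qed

lemma Vf_bellman:
  assumes "is_mdp P R \<gamma>" "is_policy \<pi>"
  shows "Vf P R \<gamma> \<pi> s0 = rpi R \<pi> s0 + \<gamma> * (\<Sum>s1\<in>UNIV. Ppi P \<pi> s0 s1 * Vf P R \<gamma> \<pi> s1)"
proof -
  note summable = summable_discounted_expected_cost[OF assms]
  have "(\<Sum>t. \<gamma> ^ Suc t * expected_cost P R \<pi> (Suc t) s0)
      = (\<Sum>t. \<gamma> * (\<Sum>s1\<in>UNIV. Ppi P \<pi> s0 s1 * (\<gamma> ^ t * expected_cost P R \<pi> t s1)))"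
    by (simp add: expected_cost_Suc sum_distrib_left mult_ac)
  also have "\<dots> = \<gamma> * (\<Sum>t. \<Sum>s1\<in>UNIV. Ppi P \<pi> s0 s1 * (\<gamma> ^ t * expected_cost P R \<pi> t s1))"
    by (intro suminf_mult summable_sum summable_mult summable)
  also have "(\<Sum>t. \<Sum>s1\<in>UNIV. Ppi P \<pi> s0 s1 * (\<gamma> ^ t * expected_cost P R \<pi> t s1))
      = (\<Sum>s1\<in>UNIV. \<Sum>t. Ppi P \<pi> s0 s1 * (\<gamma> ^ t * expected_cost P R \<pi> t s1))"
    by (intro suminf_sum summable_mult summable)
  also have "\<dots> = (\<Sum>s1\<in>UNIV. Ppi P \<pi> s0 s1 * Vf P R \<gamma> \<pi> s1)"
    unfolding Vf_eq_suminf_expected_cost by (intro sum.cong refl suminf_mult summable)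
  finally have tail: "(\<Sum>t. \<gamma> ^ Suc t * expected_cost P R \<pi> (Suc t) s0)
      = \<gamma> * (\<Sum>s1\<in>UNIV. Ppi P \<pi> s0 s1 * Vf P R \<gamma> \<pi> s1)" .
  have "expected_cost P R \<pi> 0 s0 = rpi R \<pi> s0"
    by (simp add: expected_cost_def if_distrib[of "\<lambda>x. x * _"] cong: if_cong)
  with suminf_split_head[OF summable[of s0]] tail show ?thesis
    unfolding Vf_eq_suminf_expected_cost by simp
qed

lemma inner_Qf:
  "Qf P R \<gamma> \<pi> s \<bullet> p = rpi R (\<lambda>_. p) s + \<gamma> * (\<Sum>s'\<in>UNIV. Ppi P (\<lambda>_. p) s s' * Vf P R \<gamma> \<pi> s')"
proof -
  have "Qf P R \<gamma> \<pi> s \<bullet> p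
      = (\<Sum>a\<in>UNIV. p $ a * R s a + \<gamma> * (\<Sum>s'\<in>UNIV. p $ a * P s a s' * Vf P R \<gamma> \<pi> s'))"
    unfolding Qf_def inner_vec_def by (intro sum.cong) (simp_all add: sum_distrib_left algebra_simps)
  also have "\<dots> = (\<Sum>a\<in>UNIV. p $ a * R s a)
      + \<gamma> * (\<Sum>a\<in>UNIV. \<Sum>s'\<in>UNIV. p $ a * P s a s' * Vf P R \<gamma> \<pi> s')"
    by (simp add: sum.distrib sum_distrib_left)
  also have "(\<Sum>a\<in>UNIV. \<Sum>s'\<in>UNIV. p $ a * P s a s' * Vf P R \<gamma> \<pi> s')
      = (\<Sum>s'\<in>UNIV. Ppi P (\<lambda>_. p) s s' * Vf P R \<gamma> \<pi> s')"
    unfolding Ppi_def by (subst sum.swap) (simp add: sum_distrib_right)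
  finally show ?thesis unfolding rpi_def by simp
qed

lemma Vf_performance_difference:
  assumes mdp: "is_mdp P R \<gamma>" and \<pi>: "is_policy \<pi>" and \<pi>': "is_policy \<pi>'"
  shows "Vf P R \<gamma> \<pi>' s - Vf P R \<gamma> \<pi> s = Qf P R \<gamma> \<pi> s \<bullet> (\<pi>' s - \<pi> s)
      + \<gamma> * (\<Sum>s'\<in>UNIV. Ppi P \<pi>' s s' * (Vf P R \<gamma> \<pi>' s' - Vf P R \<gamma> \<pi> s'))"
proof -
  have const: "rpi R (\<lambda>_. \<sigma> s) s = rpi R \<sigma> s" "Ppi P (\<lambda>_. \<sigma> s) s = Ppi P \<sigma> s" for \<sigma>
    by (simp_all add: rpi_def Ppi_def fun_eq_iff)
  have "Vf P R \<gamma> \<pi> s = Qf P R \<gamma> \<pi> s \<bullet> \<pi> s"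
    using Vf_bellman[OF mdp \<pi>, of s] by (simp add: inner_Qf const)
  moreover have "Qf P R \<gamma> \<pi> s \<bullet> \<pi>' s
      = rpi R \<pi>' s + \<gamma> * (\<Sum>s'\<in>UNIV. Ppi P \<pi>' s s' * Vf P R \<gamma> \<pi> s')"
    by (simp add: inner_Qf const)
  ultimately show ?thesis
    using Vf_bellman[OF mdp \<pi>', of s]
    by (simp add: inner_diff_right algebra_simps sum_subtractf)
qed

lemma Vf_diff_le:
  assumes mdp: "is_mdp P R \<gamma>" and \<pi>: "is_policy \<pi>" and \<pi>': "is_policy \<pi>'"
    and c: "\<And>s. Qf P R \<gamma> \<pi> s \<bullet> (\<pi>' s - \<pi> s) \<le> c"
  shows "Vf P R \<gamma> \<pi>' s - Vf P R \<gamma> \<pi> s \<le> c / (1 - \<gamma>)"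
proof -
  have \<gamma>: "0 \<le> \<gamma>" "\<gamma> < 1" using mdp by (auto simp: is_mdp_def)
  define D where "D = (\<lambda>s. Vf P R \<gamma> \<pi>' s - Vf P R \<gamma> \<pi> s)"
  define M where "M = Max (range D)"
  have D_le_M: "D s \<le> M" for s unfolding M_def by (rule Max_ge) auto
  have "M \<in> range D" unfolding M_def by (rule Max_in) auto
  then obtain s_max where M: "M = D s_max" by auto
  have "(\<Sum>s'\<in>UNIV. Ppi P \<pi>' s_max s' * D s') \<le> (\<Sum>s'\<in>UNIV. Ppi P \<pi>' s_max s' * M)"
    by (intro sum_mono mult_left_mono D_le_M Ppi_nonneg[OF mdp \<pi>'])
  also have "\<dots> = M" by (simp add: sum_distrib_right[symmetric] Ppi_row_sum[OF mdp \<pi>'])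
  finally have "\<gamma> * (\<Sum>s'\<in>UNIV. Ppi P \<pi>' s_max s' * D s') \<le> \<gamma> * M"
    using \<gamma>(1) by (rule mult_left_mono)
  moreover have "D s_max = Qf P R \<gamma> \<pi> s_max \<bullet> (\<pi>' s_max - \<pi> s_max)
      + \<gamma> * (\<Sum>s'\<in>UNIV. Ppi P \<pi>' s_max s' * D s')"
    unfolding D_def by (rule Vf_performance_difference[OF mdp \<pi> \<pi>'])
  ultimately have "M \<le> c + \<gamma> * M" using c[of s_max] M by linarith
  then have "M \<le> c / (1 - \<gamma>)" using \<gamma> by (simp add: pos_le_divide_eq algebra_simps)
  with D_le_M[of s] show ?thesis unfolding D_def by simp
qed

lemma Vrho_diff_le:
  assumes "prob_dist \<rho>" "\<And>s. Vf P R \<gamma> \<pi>' s - Vf P R \<gamma> \<pi> s \<le> C"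
  shows "Vrho P R \<gamma> \<pi>' \<rho> - Vrho P R \<gamma> \<pi> \<rho> \<le> C"
proof -
  have "Vrho P R \<gamma> \<pi>' \<rho> - Vrho P R \<gamma> \<pi> \<rho> = (\<Sum>s\<in>UNIV. \<rho> s * (Vf P R \<gamma> \<pi>' s - Vf P R \<gamma> \<pi> s))"
    unfolding Vrho_def by (simp add: sum_subtractf right_diff_distrib)
  also have "\<dots> \<le> (\<Sum>s\<in>UNIV. \<rho> s * C)"
    using assms by (intro sum_mono mult_left_mono) (auto simp: prob_dist_def)
  also have "\<dots> = C"
    using assms(1) by (simp add: prob_dist_def sum_distrib_right[symmetric])
  finally show ?thesis .
qed

section \<open>Legendre functions\<close>

lemma convex_on_line_restriction:
  fixes f :: "'v::real_vector \<Rightarrow> real"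
  assumes f: "convex_on S f"
  shows "convex_on {t::real. x + t *\<^sub>R d \<in> S} (\<lambda>t. f (x + t *\<^sub>R d))"
proof -
  have S: "convex S" using f by (rule convex_on_imp_convex)
  have line: "x + ((1 - u) * a + u * b) *\<^sub>R d = (1 - u) *\<^sub>R (x + a *\<^sub>R d) + u *\<^sub>R (x + b *\<^sub>R d)"
    for u a b by (simp add: algebra_simps)
  have "convex {t::real. x + t *\<^sub>R d \<in> S}"
    unfolding convex_alt using S by (auto simp: line convex_alt)
  then show ?thesis
    by (intro convex_onI) (use convex_onD[OF f] in \<open>auto simp: line\<close>)
qed

lemma legendre_edom:
  assumes "legendre h"
  shows "convex (edom h)" "convex_on (edom h) (hr h)" "interior (edom h) \<noteq> {}"
  using assms by (auto simp: legendre_def proper_convex_def essentially_smooth_def)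

lemma legendre_eq_ereal_hr: "legendre h \<Longrightarrow> p \<in> edom h \<Longrightarrow> h p = ereal (hr h p)"
  by (cases "h p") (auto simp: edom_def hr_def legendre_def proper_convex_def)

lemma bregman_legendre:
  "legendre h \<Longrightarrow> p \<in> edom h \<Longrightarrow> q \<in> edom h \<Longrightarrow>
    bregman h p q = ereal (hr h p - hr h q - grad h q \<bullet> (p - q))"
  unfolding bregman_def by (simp add: legendre_eq_ereal_hr)

lemma legendre_has_derivative_grad:
  assumes "legendre h" "x \<in> interior (edom h)"
  shows "(hr h has_derivative (\<lambda>v. grad h x \<bullet> v)) (at x)"
proof -
  have "\<exists>g. (hr h has_derivative (\<lambda>v. g \<bullet> v)) (at x)"
    using assms by (auto simp: legendre_def essentially_smooth_def)
  then show ?thesis unfolding grad_def by (rule someI_ex)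
qed

lemma legendre_gradient_inequality:
  assumes leg: "legendre h" and x: "x \<in> interior (edom h)" and y: "y \<in> edom h"
  shows "hr h x + grad h x \<bullet> (y - x) \<le> hr h y"
proof -
  define A where "A = {t::real. x + t *\<^sub>R (y - x) \<in> edom h}"
  define f where "f = (\<lambda>t. hr h (x + t *\<^sub>R (y - x)))"
  have f_convex: "convex_on A f"
    unfolding A_def f_def by (rule convex_on_line_restriction[OF legendre_edom(2)[OF leg]])
  have "open ((\<lambda>t::real. x + t *\<^sub>R (y - x)) -` interior (edom h))"
    by (intro continuous_open_vimage open_interior continuous_intros)
  then have "open {t::real. x + t *\<^sub>R (y - x) \<in> interior (edom h)}"
    by (simp add: vimage_def)
  moreover have "{t::real. x + t *\<^sub>R (y - x) \<in> interior (edom h)} \<subseteq> A"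
    unfolding A_def using interior_subset by auto
  ultimately have "{t::real. x + t *\<^sub>R (y - x) \<in> interior (edom h)} \<subseteq> interior A"
    by (simp add: interior_maximal)
  then have "0 \<in> interior A" using x by auto
  have "((\<lambda>t::real. x + t *\<^sub>R (y - x)) has_derivative (\<lambda>t. t *\<^sub>R (y - x))) (at 0 within A)"
    by (intro derivative_eq_intros) auto
  moreover have "(hr h has_derivative (\<lambda>v. grad h x \<bullet> v)) (at (x + 0 *\<^sub>R (y - x)))"
    using legendre_has_derivative_grad[OF leg x] by simp
  ultimately have "(f has_derivative (\<lambda>t. grad h x \<bullet> (t *\<^sub>R (y - x)))) (at 0 within A)"
    unfolding f_def by (rule has_derivative_compose)
  moreover have "(\<lambda>t. grad h x \<bullet> (t *\<^sub>R (y - x))) = (*) (grad h x \<bullet> (y - x))"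
    by (auto simp: fun_eq_iff)
  ultimately have "(f has_field_derivative (grad h x \<bullet> (y - x))) (at 0 within A)"
    unfolding has_field_derivative_def by simp
  from convex_on_imp_above_tangent[OF f_convex convex_connected[OF convex_on_imp_convex[OF f_convex]]
      \<open>0 \<in> interior A\<close> _ this, of 1]
  show ?thesis unfolding A_def f_def using y by simp
qed

lemma legendre_grad_norm_bound:
  assumes leg: "legendre h" and e: "0 < e" "cball q e \<subseteq> interior (edom h)"
    and B: "\<And>w. w \<in> cball q e \<Longrightarrow> hr h w \<le> B" and z: "z \<in> interior (edom h)"
  shows "e * norm (grad h z) \<le> B - hr h z + grad h z \<bullet> (z - q)"
proof (cases "grad h z = 0")
  case True
  have "q \<in> edom h" using e interior_subset by fastforce
  with legendre_gradient_inequality[OF leg z] B[of q] e(1) True show ?thesis by fastforce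
next
  case False
  define G where "G = grad h z"
  define w where "w = q + (e / norm G) *\<^sub>R G"
  have w: "w \<in> cball q e" using e(1) by (simp add: w_def dist_norm)
  then have "w \<in> edom h" using e(2) interior_subset by blast
  then have "hr h z + G \<bullet> (w - z) \<le> B"
    using legendre_gradient_inequality[OF leg z] B[OF w] unfolding G_def by fastforce
  moreover have "G \<bullet> (w - z) = G \<bullet> (q - z) + e * norm G"
    using False by (simp add: w_def G_def inner_simps dot_square_norm power2_eq_square)
  ultimately show ?thesis unfolding G_def by (simp add: inner_diff_right)
qed

lemma legendre_grad_unbounded_at_boundary:
  assumes leg: "legendre h" and x: "x \<in> edom h" "x \<notin> interior (edom h)"
    and X: "\<And>i. X i \<in> interior (edom h)" "X \<longlonglongrightarrow> x"
  shows "filterlim (\<lambda>i. norm (grad h (X i))) at_top sequentially"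
proof -
  have "x \<in> frontier (interior (edom h))"
    unfolding frontier_def interior_interior
      convex_closure_interior[OF legendre_edom(1,3)[OF leg]]
    using x closure_subset by auto
  with X leg show ?thesis by (auto simp: legendre_def essentially_smooth_def)
qed

lemma legendre_min_segment_slope:
  assumes leg: "legendre h" and x: "x \<in> edom h" and l: "0 < l"
    and z: "x + l *\<^sub>R (q - x) \<in> interior (edom h)"
    and min: "c \<bullet> x + hr h x \<le> c \<bullet> (x + l *\<^sub>R (q - x)) + hr h (x + l *\<^sub>R (q - x))"
  shows "- (c \<bullet> (q - x)) \<le> grad h (x + l *\<^sub>R (q - x)) \<bullet> (q - x)"
proof -
  let ?z = "x + l *\<^sub>R (q - x)"
  have "hr h ?z + grad h ?z \<bullet> (x - ?z) \<le> hr h x"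
    using legendre_gradient_inequality[OF leg z x] .
  then have "l * (- (c \<bullet> (q - x))) \<le> l * (grad h ?z \<bullet> (q - x))"
    using min by (simp add: inner_simps algebra_simps)
  then show ?thesis by (rule mult_le_cancel_left_pos[OF l, THEN iffD1])
qed

lemma legendre_bounded_above_near_interior:
  assumes leg: "legendre h" and q: "q \<in> interior (edom h)"
  obtains e B where "0 < e" "cball q e \<subseteq> interior (edom h)" "\<And>w. w \<in> cball q e \<Longrightarrow> hr h w \<le> B"
proof -
  obtain e where e: "0 < e" "cball q e \<subseteq> interior (edom h)"
    using open_contains_cball q open_interior by blast
  have "continuous_on (cball q e) (hr h)"
    using e(2) has_derivative_continuous[OF legendre_has_derivative_grad[OF leg]]
    by (intro continuous_at_imp_continuous_on) auto
  then have "bounded (hr h ` cball q e)"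
    by (intro compact_imp_bounded compact_continuous_image compact_cball)
  then obtain B where "\<forall>y\<in>hr h ` cball q e. \<bar>y\<bar> \<le> B"
    unfolding bounded_iff real_norm_def by blast
  then have "\<And>w. w \<in> cball q e \<Longrightarrow> hr h w \<le> B" by (auto dest: abs_le_D1)
  with e that show ?thesis by blast
qed

lemma legendre_min_segment_grad_bound:
  assumes leg: "legendre h" and x: "x \<in> edom h" and l: "0 < l" "l \<le> 1"
    and e: "0 < e" "cball q e \<subseteq> interior (edom h)" and B: "\<And>w. w \<in> cball q e \<Longrightarrow> hr h w \<le> B"
    and z: "x + l *\<^sub>R (q - x) \<in> interior (edom h)"
    and min: "c \<bullet> x + hr h x \<le> c \<bullet> (x + l *\<^sub>R (q - x)) + hr h (x + l *\<^sub>R (q - x))"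
  shows "e * norm (grad h (x + l *\<^sub>R (q - x)))
    \<le> B - hr h q + \<bar>c \<bullet> (q - x)\<bar> + \<bar>grad h q \<bullet> (x - q)\<bar>"
proof -
  let ?z = "x + l *\<^sub>R (q - x)"
  have q: "q \<in> interior (edom h)" using e by auto
  have zq: "?z - q = (1 - l) *\<^sub>R (x - q)" by (simp add: algebra_simps)
  have "- (c \<bullet> (q - x)) \<le> grad h ?z \<bullet> (q - x)"
    using legendre_min_segment_slope[OF leg x l(1) z min] .
  then have "(1 - l) * (grad h ?z \<bullet> (x - q)) \<le> (1 - l) * (c \<bullet> (q - x))"
    using l by (intro mult_left_mono) (auto simp: inner_diff_right)
  moreover have "\<bar>(1 - l) * (c \<bullet> (q - x))\<bar> \<le> \<bar>c \<bullet> (q - x)\<bar>"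
    using l by (simp add: abs_mult mult_left_le_one_le)
  moreover have "hr h q + grad h q \<bullet> (?z - q) \<le> hr h ?z"
    using legendre_gradient_inequality[OF leg q] z interior_subset by blast
  moreover have "\<bar>(1 - l) * (grad h q \<bullet> (x - q))\<bar> \<le> \<bar>grad h q \<bullet> (x - q)\<bar>"
    using l by (simp add: abs_mult mult_left_le_one_le)
  ultimately show ?thesis
    using legendre_grad_norm_bound[OF leg e B z] unfolding zq by auto
qed

lemma legendre_argmin_interior:
  fixes c :: "real^'n::finite"
  assumes leg: "legendre h" and S: "convex S" "S \<subseteq> edom h"
    and q: "q \<in> S" "q \<in> interior (edom h)" and x: "x \<in> S"
    and min: "\<And>p. p \<in> S \<Longrightarrow> c \<bullet> x + hr h x \<le> c \<bullet> p + hr h p"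
  shows "x \<in> interior (edom h)"
proof (rule ccontr)
  assume x_bd: "x \<notin> interior (edom h)"
  define z where "z = (\<lambda>l::real. x + l *\<^sub>R (q - x))"
  have xE: "x \<in> edom h" using x S by auto
  have z_int: "z l \<in> interior (edom h)" if "0 < l" "l \<le> 1" for l
    using mem_interior_closure_convex_shrink[OF legendre_edom(1)[OF leg] q(2) _ that, of x]
      xE closure_subset by (auto simp: z_def algebra_simps)
  have z_S: "z l \<in> S" if "0 \<le> l" "l \<le> 1" for l
    using convexD_alt[OF S(1) x q(1) that] by (simp add: z_def algebra_simps)
  obtain e B where e: "0 < e" "cball q e \<subseteq> interior (edom h)"
    and B: "\<And>w. w \<in> cball q e \<Longrightarrow> hr h w \<le> B"
    using legendre_bounded_above_near_interior[OF leg q(2)] by blast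
  define K where "K = B - hr h q + \<bar>c \<bullet> (q - x)\<bar> + \<bar>grad h q \<bullet> (x - q)\<bar>"
  have bound: "e * norm (grad h (z l)) \<le> K" if l: "0 < l" "l \<le> 1" for l
    using legendre_min_segment_grad_bound[OF leg xE l e B] z_int[OF l] min[OF z_S] l
    unfolding z_def K_def by simp
  define X where "X = (\<lambda>i. z (inverse (real (Suc i))))"
  have "(\<lambda>i. x + inverse (real (Suc i)) *\<^sub>R (q - x)) \<longlonglongrightarrow> x + 0 *\<^sub>R (q - x)"
    by (intro tendsto_intros LIMSEQ_inverse_real_of_nat)
  then have "filterlim (\<lambda>i. norm (grad h (X i))) at_top sequentially"
    using legendre_grad_unbounded_at_boundary[OF leg xE x_bd] z_int
    by (simp add: X_def z_def field_simps)
  then obtain i where "K / e + 1 \<le> norm (grad h (X i))"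
    by (auto simp: filterlim_at_top eventually_sequentially)
  moreover have "e * norm (grad h (X i)) \<le> K"
    unfolding X_def by (rule bound) (auto simp: field_simps)
  ultimately show False using e(1) by (simp add: field_simps)
qed

section \<open>Mirror descent on the action simplex\<close>

lemma convex_act_simplex: "convex act_simplex"
  unfolding convex_def act_simplex_def
  by (auto simp: sum.distrib sum_distrib_left[symmetric])

lemma pos_in_rel_interior_act_simplex:
  assumes p: "p \<in> act_simplex" "\<And>a. 0 < p $ a"
  shows "p \<in> rel_interior act_simplex"
proof -
  define e where "e = Min (range (\<lambda>a. p $ a))"
  have e: "0 < e" unfolding e_def using p(2) by (subst Min_gr_iff) auto
  have e_le: "e \<le> p $ a" for a unfolding e_def by (rule Min_le) auto
  have "act_simplex \<subseteq> {y::real^'a. (\<chi> a. 1) \<bullet> y = 1}"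
    by (auto simp: act_simplex_def inner_vec_def)
  then have hull: "affine hull act_simplex \<subseteq> {y::real^'a. (\<chi> a. 1) \<bullet> y = 1}"
    by (intro hull_minimal affine_hyperplane)
  have "ball p e \<inter> affine hull act_simplex \<subseteq> act_simplex"
  proof
    fix y assume y: "y \<in> ball p e \<inter> affine hull act_simplex"
    have "0 \<le> y $ a" for a
    proof -
      have "\<bar>p $ a - y $ a\<bar> \<le> norm (p - y)"
        using component_le_norm_cart[of "p - y" a] by simp
      also have "\<dots> < e" using y by (simp add: dist_norm)
      finally show ?thesis using e_le[of a] by simp
    qed
    moreover have "(\<Sum>a\<in>UNIV. y $ a) = 1" using y hull by (auto simp: inner_vec_def)
    ultimately show "y \<in> act_simplex" by (simp add: act_simplex_def)
  qed
  then show ?thesis using p(1) e by (auto simp: mem_rel_interior_ball)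
qed

lemma inner_diff_act_simplex_le:
  assumes E: "\<And>a. \<bar>E $ a\<bar> \<le> \<tau>" and p: "p \<in> act_simplex" and q: "q \<in> act_simplex"
  shows "E \<bullet> (p - q) \<le> 2 * \<tau>"
proof -
  have "E \<bullet> (p - q) \<le> (\<Sum>a\<in>UNIV. \<tau> * (p $ a + q $ a))"
    unfolding inner_vec_def
  proof (rule sum_mono)
    fix a
    have "\<bar>(p - q) $ a\<bar> \<le> p $ a + q $ a"
      using p q by (auto simp: act_simplex_def abs_le_iff)
    then have "\<bar>E $ a\<bar> * \<bar>(p - q) $ a\<bar> \<le> \<tau> * (p $ a + q $ a)"
      using E[of a] by (intro mult_mono) auto
    then show "E $ a \<bullet> (p - q) $ a \<le> \<tau> * (p $ a + q $ a)"
      by (simp add: abs_mult[symmetric])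
  qed
  also have "\<dots> = 2 * \<tau>"
    using p q by (simp add: act_simplex_def sum_distrib_left[symmetric] sum.distrib)
  finally show ?thesis .
qed

lemma mirror_descent_step:
  fixes Q :: "real^'a::finite"
  assumes leg: "legendre h" and dom: "act_simplex \<subseteq> edom h"
    and y: "y \<in> act_simplex" "y \<in> interior (edom h)" and \<eta>: "0 < \<eta>"
    and x: "is_arg_min (\<lambda>p. ereal (\<eta> * (Q \<bullet> p)) + bregman h p y) (\<lambda>p. p \<in> act_simplex) x"
  shows "x \<in> interior (edom h)" "Q \<bullet> (x - y) \<le> 0"
proof -
  have yE: "y \<in> edom h" using y(2) interior_subset by blast
  have x_S: "x \<in> act_simplex" using x by (simp add: is_arg_min_def)
  have x_min: "\<eta> * (Q \<bullet> x) + (hr h x - hr h y - grad h y \<bullet> (x - y))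
      \<le> \<eta> * (Q \<bullet> p) + (hr h p - hr h y - grad h y \<bullet> (p - y))" if p: "p \<in> act_simplex" for p
    using x p dom x_S unfolding is_arg_min_def
    by (auto simp: bregman_legendre[OF leg _ yE] subset_iff not_less)
  show "x \<in> interior (edom h)"
  proof (rule legendre_argmin_interior[OF leg convex_act_simplex dom y x_S])
    fix p :: "real^'a" assume "p \<in> act_simplex"
    from x_min[OF this]
    show "(\<eta> *\<^sub>R Q - grad h y) \<bullet> x + hr h x \<le> (\<eta> *\<^sub>R Q - grad h y) \<bullet> p + hr h p"
      by (simp add: inner_simps)
  qed
  have "hr h y + grad h y \<bullet> (x - y) \<le> hr h x"
    using legendre_gradient_inequality[OF leg y(2)] x_S dom by blast
  then have "\<eta> * (Q \<bullet> x) \<le> \<eta> * (Q \<bullet> y)"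
    using x_min[OF y(1)] by simp
  then show "Q \<bullet> (x - y) \<le> 0"
    using \<eta> by (simp add: inner_diff_right)
qed

theorem lemma12:
  fixes P :: "'s::finite \<Rightarrow> 'a::finite \<Rightarrow> 's \<Rightarrow> real"
    and R :: "'s \<Rightarrow> 'a \<Rightarrow> real"
    and \<gamma> :: real
    and h :: "real^'a \<Rightarrow> ereal"
    and \<pi> :: "nat \<Rightarrow> 's \<Rightarrow> real^'a"
    and Qhat :: "nat \<Rightarrow> 's \<Rightarrow> real^'a"
    and \<eta> :: "nat \<Rightarrow> real"
    and \<tau> :: real
  assumes mdp: "is_mdp P R \<gamma>"
    and leg: "legendre h"
    and dom_simplex: "act_simplex \<subseteq> edom h"
    and rint_simplex: "rel_interior act_simplex \<subseteq> rel_interior (edom h)"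
    and init: "rint_policy (\<pi> 0)"
    and step_pos: "\<forall>k. 0 < \<eta> k"
    and update: "\<forall>k s. is_arg_min
        (\<lambda>p. ereal (\<eta> k * (Qhat k s \<bullet> p)) + bregman h p (\<pi> k s))
        (\<lambda>p. p \<in> act_simplex) (\<pi> (Suc k) s)"
    and err: "\<forall>k s a. \<bar>Qhat k s $ a - Qf P R \<gamma> (\<pi> k) s $ a\<bar> \<le> \<tau>"
  shows "\<forall>k. (\<forall>s. Qhat k s \<bullet> (\<pi> (Suc k) s - \<pi> k s) \<le> 0) \<and>
             (\<forall>\<rho>. prob_dist \<rho> \<longrightarrow>
                Vrho P R \<gamma> (\<pi> (Suc k)) \<rho> - Vrho P R \<gamma> (\<pi> k) \<rho> \<le> 2 / (1 - \<gamma>) * \<tau>)"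
proof -
  have rint_subset: "rel_interior act_simplex \<subseteq> interior (edom h)"
    using rint_simplex rel_interior_nonempty_interior[OF legendre_edom(3)[OF leg]] by simp
  have iterate: "\<pi> k s \<in> act_simplex \<and> \<pi> k s \<in> interior (edom h)" for k s
  proof (induction k arbitrary: s)
    case 0
    have "\<pi> 0 s \<in> act_simplex" "\<And>a. 0 < \<pi> 0 s $ a"
      using init by (auto simp: rint_policy_def is_policy_def)
    then show ?case using pos_in_rel_interior_act_simplex rint_subset by blast
  next
    case (Suc k)
    have "\<pi> (Suc k) s \<in> act_simplex" using update by (simp add: is_arg_min_def)
    then show ?case
      using mirror_descent_step(1)[OF leg dom_simplex _ _ _ update[rule_format]] Suc step_pos by blast
  qed
  have descent: "Qhat k s \<bullet> (\<pi> (Suc k) s - \<pi> k s) \<le> 0" for k s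
    using mirror_descent_step(2)[OF leg dom_simplex _ _ _ update[rule_format]] iterate step_pos
    by blast
  have "Qf P R \<gamma> (\<pi> k) s \<bullet> (\<pi> (Suc k) s - \<pi> k s) \<le> 2 * \<tau>" for k s
  proof -
    have "(Qf P R \<gamma> (\<pi> k) s - Qhat k s) \<bullet> (\<pi> (Suc k) s - \<pi> k s) \<le> 2 * \<tau>"
      using err iterate by (intro inner_diff_act_simplex_le) (auto simp: abs_minus_commute)
    with descent[of k s] show ?thesis by (simp add: inner_diff_left)
  qed
  moreover have "is_policy (\<pi> k)" for k using iterate by (simp add: is_policy_def)
  ultimately have "Vf P R \<gamma> (\<pi> (Suc k)) s - Vf P R \<gamma> (\<pi> k) s \<le> 2 / (1 - \<gamma>) * \<tau>" for k s
    using Vf_diff_le[OF mdp] by simp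
  then show ?thesis using descent Vrho_diff_le by blast
qed

end
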